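(* For each $n\in\omega$ let $\tau_n$ be the order topology on $A_n$ induced by $\leq_n$. Then in $\mathcal{N}_{\mathbb{R}}$ each space $\langle A_n,\tau_n\rangle$ is metrizable and the family $\{\langle A_n,\tau_n\rangle:n\in\omega\}$ is denumerable, but the direct sum $\bigoplus_{n\in\omega}\langle A_n,\tau_n\rangle$ is not metrizable in $\mathcal{N}_{\mathbb{R}}$. In consequence, for the metrics $d_n(a_{n,x},a_{n,y})=|x-y|$ on $A_n$, the family $\{d_n:n\in\omega\}$ does not belong to $\mathcal{N}_{\mathbb{R}}$, and $\mathbf{CSM}_{le}$ is false in $\mathcal{N}_{\mathbb{R}}$.
   Context: Permutation model $\mathcal{N}_{\mathbb{R}}$: Let $\mathcal{M}$ be a model of $\mathbf{ZFA}+\mathbf{AC}$ whose set of atoms is $A=\bigcup_{n\in\omega}A_n$, a pairwise disjoint union, where $A_n=\{a_{n,x}:x\in\mathbb{R}\}$ and $x\mapsto a_{n,x}$ is a bijection (in $\mathcal{M}$). Let $\leq_n$ be the linear order on $A_n$ given by $a_{n,x}\leq_n a_{n,y}\iff x\le y$. Let $\mathcal{G}$ be the group of all permutations $\pi$ of $A$ such that for every $n$, $\pi\upharpoonright A_n$ is an order-automorphism of $\langle A_n,\leq_n\rangle$. Let $\mathcal{I}$ be the ideal of all $E\subseteq A$ with $E\subseteq\bigcup_{n\in S}A_n$ for some finite $S\subseteq\omega$. Then $\mathcal{N}_{\mathbb{R}}$ is the class of all $x\in\mathcal{M}$ such that every $t\in\mathrm{TC}(\{x\})$ has a support $E\in\mathcal{I}$,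 i.e. every $\phi\in\mathcal{G}$ fixing $E$ pointwise satisfies $\phi(t)=t$ (permutations acting on $\mathcal{M}$ via their $\in$-automorphism extensions). $\mathbf{CSM}_{le}$: every countable direct sum of metrizable spaces is metrizable. *)

theory Defs
  imports Complex_Main
begin

text \<open>Atoms a_{n,x} are represented by pairs (n, x) :: nat \<times> real.
  Membership of the relevant objects (sets of atoms, sets of sets of atoms,
  graphs of real-valued metrics, indexed families of these) in the permutation
  model N_R is expressed by the literal definition: they have a support in the
  ideal I (reals, naturals and ordered pairs of such are pure sets, hence
  hereditarily fixed).\<close>

type_synonym atom = "nat \<times> real"

definition A :: "nat \<Rightarrow> atom set" where
  "A n = {n} \<times> UNIV"

definition Gperm :: "(atom \<Rightarrow> atom) set" where
  "Gperm = {\<pi>. \<exists>f :: nat \<Rightarrow> real \<Rightarrow> real.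
      (\<forall>n. strict_mono (f n) \<and> surj (f n)) \<and> (\<forall>n x. \<pi> (n, x) = (n, f n x))}"

definition fixes_blocks :: "(atom \<Rightarrow> atom) \<Rightarrow> nat set \<Rightarrow> bool" where
  "fixes_blocks \<pi> S \<longleftrightarrow> (\<forall>n\<in>S. \<forall>a\<in>A n. \<pi> a = a)"

text \<open>t has a support in I, with respect to a given action of G.
  (Every E in I is contained in a finite union of blocks, and supports are
  upward closed, so it suffices to consider finite unions of blocks.)\<close>
definition symm :: "((atom \<Rightarrow> atom) \<Rightarrow> 'x \<Rightarrow> 'x) \<Rightarrow> 'x \<Rightarrow> bool" where
  "symm act t \<longleftrightarrow> (\<exists>S. finite S \<and> (\<forall>\<pi>\<in>Gperm. fixes_blocks \<pi> S \<longrightarrow> act \<pi> t = t))"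

text \<open>Actions (induced by the epsilon-automorphism extension).\<close>
definition act_set :: "(atom \<Rightarrow> atom) \<Rightarrow> atom set \<Rightarrow> atom set" where
  "act_set \<pi> U = \<pi> ` U"

definition act_setset :: "(atom \<Rightarrow> atom) \<Rightarrow> atom set set \<Rightarrow> atom set set" where
  "act_setset \<pi> T = act_set \<pi> ` T"

definition act_graph ::
  "(atom \<Rightarrow> atom) \<Rightarrow> ((atom \<times> atom) \<times> real) set \<Rightarrow> ((atom \<times> atom) \<times> real) set" where
  "act_graph \<pi> D = (\<lambda>((a, b), r). ((\<pi> a, \<pi> b), r)) ` D"

definition act_graphs ::
  "(atom \<Rightarrow> atom) \<Rightarrow> ((atom \<times> atom) \<times> real) set set \<Rightarrow> ((atom \<times> atom) \<times> real) set set" where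
  "act_graphs \<pi> F = act_graph \<pi> ` F"

definition act_spacefam ::
  "(atom \<Rightarrow> atom) \<Rightarrow> (nat \<Rightarrow> atom set \<times> atom set set) \<Rightarrow> (nat \<Rightarrow> atom set \<times> atom set set)" where
  "act_spacefam \<pi> F = (\<lambda>n. (act_set \<pi> (fst (F n)), act_setset \<pi> (snd (F n))))"

definition graph :: "atom set \<Rightarrow> (atom \<Rightarrow> atom \<Rightarrow> real) \<Rightarrow> ((atom \<times> atom) \<times> real) set" where
  "graph X d = {((a, b), d a b) | a b. a \<in> X \<and> b \<in> X}"

definition metric_on :: "atom set \<Rightarrow> (atom \<Rightarrow> atom \<Rightarrow> real) \<Rightarrow> bool" where
  "metric_on X d \<longleftrightarrow>
     (\<forall>a\<in>X. \<forall>b\<in>X. 0 \<le> d a b \<and> (d a b = 0 \<longleftrightarrow> a = b) \<and> d a b = d b a) \<and>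
     (\<forall>a\<in>X. \<forall>b\<in>X. \<forall>c\<in>X. d a c \<le> d a b + d b c)"

definition metric_open :: "atom set \<Rightarrow> (atom \<Rightarrow> atom \<Rightarrow> real) \<Rightarrow> atom set \<Rightarrow> bool" where
  "metric_open X d U \<longleftrightarrow> U \<subseteq> X \<and>
     (\<forall>a\<in>U. \<exists>e>0. \<forall>b\<in>X. d a b < e \<longrightarrow> b \<in> U)"

definition tau :: "nat \<Rightarrow> atom set set" where
  "tau n = {{n} \<times> V | V. generate_topology (range lessThan \<union> range greaterThan) (V :: real set)}"

text \<open>The topology tau_n as computed in N_R (its members lying in N_R).\<close>
definition tauN :: "nat \<Rightarrow> atom set set" where
  "tauN n = {U \<in> tau n. symm act_set U}"

definition sum_top :: "atom set set" where
  "sum_top = {U. \<forall>n. U \<inter> A n \<in> tau n}"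

text \<open>A space (X, T) (X, T in N_R) is metrizable in N_R: there is a metric d whose
  graph lies in N_R and whose metric topology, computed in N_R, equals T as
  computed in N_R.\<close>
definition metrizable_in_N :: "atom set \<Rightarrow> atom set set \<Rightarrow> bool" where
  "metrizable_in_N X T \<longleftrightarrow> (\<exists>d. metric_on X d \<and> symm act_graph (graph X d) \<and>
     (\<forall>U. symm act_set U \<longrightarrow> (U \<in> T \<longleftrightarrow> metric_open X d U)))"

definition dn :: "nat \<Rightarrow> atom \<Rightarrow> atom \<Rightarrow> real" where
  "dn n a b = \<bar>snd a - snd b\<bar>"

end

theory Submission
  imports Defs
begin

text \<open>Every increasing affine map of a single block A_m lies in G, and a metric in N_R has a
  support E in I, so for some block A_m outside E it is invariant under all these maps. They act
  transitively on pairs of distinct points of A_m, hence such a metric is constant off the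
  diagonal of A_m and induces the discrete topology there. Since A_m is open in the direct sum,
  its points would be isolated, whereas singletons are not open in the order topology of the
  reals. The same affine maps move the graph of d_m to the graph of a function that is none of
  the d_k, so the family of the d_n has no support in I.\<close>

lemma mem_tau_iff: "U \<in> tau n \<longleftrightarrow> (\<exists>V. open V \<and> U = {n} \<times> V)"
  unfolding tau_def open_generated_order by auto

lemma times_mem_tau_iff: "{n} \<times> V \<in> tau n \<longleftrightarrow> open V"
  unfolding mem_tau_iff by (auto simp: times_eq_iff)

lemma tau_subset_A: "U \<in> tau n \<Longrightarrow> U \<subseteq> A n"
  unfolding mem_tau_iff A_def by auto

lemma A_mem_tau: "A n \<in> tau n"
  unfolding A_def times_mem_tau_iff by simp

lemma tau_subset_sum_top: "U \<in> tau n \<Longrightarrow> U \<in> sum_top"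
proof -
  assume U: "U \<in> tau n"
  have "U \<inter> A k \<in> tau k" for k
  proof (cases "k = n")
    case False
    then have "U \<inter> A k = {k} \<times> {}" using tau_subset_A[OF U] unfolding A_def by auto
    then show ?thesis using times_mem_tau_iff[of k "{}"] by simp
  qed (use U tau_subset_A in \<open>simp add: Int_absorb2\<close>)
  then show ?thesis unfolding sum_top_def by blast
qed

lemma open_vimage_strict_mono_surj:
  fixes f :: "'a::{dense_linorder, linorder_topology} \<Rightarrow> 'a"
  assumes "strict_mono f" "surj f" "open V"
  shows "open (f -` V)"
proof (rule open_vimage[OF \<open>open V\<close>], rule continuous_onI_mono)
  show "open (range f)" using \<open>surj f\<close> by simp
qed (use assms(1) in \<open>simp add: strict_mono_less_eq\<close>)

lemma open_image_strict_mono_surj: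
  fixes f :: "'a::{dense_linorder, linorder_topology} \<Rightarrow> 'a"
  assumes "strict_mono f" "surj f" "open V"
  shows "open (f ` V)"
proof -
  have "inj f" using \<open>strict_mono f\<close> strict_mono_imp_inj_on by blast
  then have "strict_mono (inv f)" "surj (inv f)"
    using strict_mono_inv[OF assms(1,2)] inj_imp_surj_inv by auto
  moreover have "f ` V = inv f -` V"
    using \<open>inj f\<close> \<open>surj f\<close> by (auto simp: image_iff) (metis surj_f_inv_f)
  ultimately show ?thesis using open_vimage_strict_mono_surj \<open>open V\<close> by metis
qed

lemma GpermE:
  assumes "\<pi> \<in> Gperm"
  obtains f where "\<And>n. strict_mono (f n)" "\<And>n. surj (f n)" "\<And>n x. \<pi> (n, x) = (n, f n x)"
  using assms unfolding Gperm_def by blast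

lemma image_block:
  assumes "\<And>n x. \<pi> (n, x) = (n, f n x)"
  shows "\<pi> ` ({n} \<times> V) = {n} \<times> f n ` V"
proof -
  have "\<pi> ` ({n} \<times> V) = (\<lambda>x. (n, f n x)) ` V" using assms by (force simp: image_iff)
  then show ?thesis by auto
qed

lemma act_set_A: "\<pi> \<in> Gperm \<Longrightarrow> act_set \<pi> (A n) = A n"
  by (erule GpermE) (simp add: act_set_def A_def image_block)

lemma act_setset_tau: "\<pi> \<in> Gperm \<Longrightarrow> act_setset \<pi> (tau n) = tau n"
proof (erule GpermE)
  fix f assume mono: "\<And>n. strict_mono (f n)" and surj: "\<And>n. surj (f n)"
    and \<pi>: "\<And>n x. \<pi> (n, x) = (n, f n x)"
  have "act_set \<pi> U \<in> tau n" if "U \<in> tau n" for U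
  proof -
    obtain V where "open V" "U = {n} \<times> V" using \<open>U \<in> tau n\<close> mem_tau_iff by blast
    then show ?thesis using open_image_strict_mono_surj[OF mono surj]
      by (simp add: act_set_def image_block[OF \<pi>] times_mem_tau_iff)
  qed
  moreover have "U \<in> act_set \<pi> ` tau n" if "U \<in> tau n" for U
  proof -
    obtain V where V: "open V" "U = {n} \<times> V" using \<open>U \<in> tau n\<close> mem_tau_iff by blast
    then have "U = act_set \<pi> ({n} \<times> f n -` V)"
      using surj by (simp add: act_set_def image_block[OF \<pi>] surj_image_vimage_eq)
    moreover have "{n} \<times> f n -` V \<in> tau n"
      using open_vimage_strict_mono_surj[OF mono surj V(1)] by (simp add: times_mem_tau_iff)
    ultimately show ?thesis by blast
  qed
  ultimately show ?thesis unfolding act_setset_def by blast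
qed

lemma symmE:
  assumes "symm act t"
  obtains S where "finite S" "\<And>\<pi>. \<pi> \<in> Gperm \<Longrightarrow> fixes_blocks \<pi> S \<Longrightarrow> act \<pi> t = t"
  using assms unfolding symm_def by blast

lemma symm_act_set_subset_A:
  assumes "U \<subseteq> A n"
  shows "symm act_set U"
  unfolding symm_def
proof (intro exI[of _ "{n}"] conjI ballI impI)
  fix \<pi> assume "fixes_blocks \<pi> {n}"
  then have "\<And>a. a \<in> U \<Longrightarrow> \<pi> a = a" using assms unfolding fixes_blocks_def by auto
  then show "act_set \<pi> U = U" unfolding act_set_def by (metis image_cong image_ident)
qed simp

lemma symm_act_graph_A: "symm act_graph (graph (A n) d)"
  unfolding symm_def
proof (intro exI[of _ "{n}"] conjI ballI impI)
  fix \<pi> assume "fixes_blocks \<pi> {n}"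
  then have fix_A: "\<And>a. a \<in> A n \<Longrightarrow> \<pi> a = a" unfolding fixes_blocks_def by auto
  show "act_graph \<pi> (graph (A n) d) = graph (A n) d"
    unfolding act_graph_def graph_def by (force simp: fix_A)
qed simp

lemma tauN_eq_tau: "tauN n = tau n"
  using symm_act_set_subset_A[OF tau_subset_A] by (auto simp: tauN_def)

lemma symm_act_spacefam_blocks: "symm act_spacefam (\<lambda>n. (A n, tauN n))"
  unfolding symm_def act_spacefam_def tauN_eq_tau using act_set_A act_setset_tau by auto

lemma symm_act_graph_isometries:
  assumes "symm act_graph (graph UNIV d)"
  obtains S where "finite S" "\<And>\<pi> a b. \<pi> \<in> Gperm \<Longrightarrow> fixes_blocks \<pi> S \<Longrightarrow> d (\<pi> a) (\<pi> b) = d a b"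
proof -
  obtain S where S: "finite S"
    "\<And>\<pi>. \<pi> \<in> Gperm \<Longrightarrow> fixes_blocks \<pi> S \<Longrightarrow> act_graph \<pi> (graph UNIV d) = graph UNIV d"
    using assms by (rule symmE) blast
  have "d (\<pi> a) (\<pi> b) = d a b" if "\<pi> \<in> Gperm" "fixes_blocks \<pi> S" for \<pi> a b
  proof -
    have "((\<pi> a, \<pi> b), d a b) \<in> act_graph \<pi> (graph UNIV d)"
      unfolding act_graph_def graph_def by (rule image_eqI[of _ _ "((a, b), d a b)"]) (simp, blast)
    then show ?thesis using S(2)[OF that] unfolding graph_def by auto
  qed
  with S(1) show thesis by (rule that)
qed

definition block_affine :: "nat \<Rightarrow> real \<Rightarrow> real \<Rightarrow> atom \<Rightarrow> atom" where
  "block_affine m u c = (\<lambda>(k, t). (k, if k = m then u + c * t else t))"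

lemma block_affine_same_block [simp]: "block_affine m u c (m, t) = (m, u + c * t)"
  by (simp add: block_affine_def)

lemma block_affine_in_Gperm:
  assumes "c > 0"
  shows "block_affine m u c \<in> Gperm"
proof -
  let ?f = "\<lambda>k t. if k = m then u + c * t else t"
  have "strict_mono (?f k)" for k
    using assms by (auto simp: strict_mono_def)
  moreover have "surj (?f k)" for k
  proof (rule surjI)
    show "?f k (if k = m then (y - u) / c else y) = y" for y
      using assms by simp
  qed
  ultimately show ?thesis
    unfolding Gperm_def block_affine_def by (intro CollectI exI[of _ ?f]) auto
qed

lemma fixes_blocks_block_affine: "m \<notin> S \<Longrightarrow> fixes_blocks (block_affine m u c) S"
  unfolding fixes_blocks_def A_def block_affine_def by auto

lemma affine_invariant_const:
  fixes \<delta> :: "real \<Rightarrow> real \<Rightarrow> real"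
  assumes sym: "\<And>s t. \<delta> s t = \<delta> t s"
    and inv: "\<And>u c s t. c > 0 \<Longrightarrow> \<delta> (u + c * s) (u + c * t) = \<delta> s t"
    and "s \<noteq> t"
  shows "\<delta> s t = \<delta> 0 1"
proof -
  have less: "\<delta> s t = \<delta> 0 1" if "s < t" for s t
    using inv[of "t - s" s 0 1] that by simp
  show ?thesis
    using \<open>s \<noteq> t\<close> less[of s t] less[of t s] sym[of s t] by linarith
qed

lemma metric_const_on_block:
  assumes "metric_on UNIV d"
    and inv: "\<And>u c a b. c > 0 \<Longrightarrow> d (block_affine m u c a) (block_affine m u c b) = d a b"
    and "s \<noteq> t"
  shows "d (m, s) (m, t) = d (m, 0) (m, 1)"
proof (rule affine_invariant_const[where \<delta> = "\<lambda>s t. d (m, s) (m, t)"])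
  show "d (m, x) (m, y) = d (m, y) (m, x)" for x y
    using assms(1) unfolding metric_on_def by blast
  show "d (m, u + c * x) (m, u + c * y) = d (m, x) (m, y)" if "c > 0" for u c x y
    using inv[OF that, of u "(m, x)" "(m, y)"] by simp
qed fact

lemma metric_on_dn: "metric_on (A n) (dn n)"
  unfolding metric_on_def dn_def A_def by auto

lemma metric_open_dn_iff: "metric_open (A n) (dn n) U \<longleftrightarrow> U \<in> tau n"
proof -
  have dn: "dn n (n, x) (n, y) = dist y x" for x y
    by (simp add: dn_def dist_real_def abs_minus_commute)
  have "metric_open (A n) (dn n) ({n} \<times> V) \<longleftrightarrow> open V" for V
    by (auto simp: metric_open_def A_def dn open_dist)
  moreover have "metric_open (A n) (dn n) U \<Longrightarrow> U = {n} \<times> {x. (n, x) \<in> U}"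
    by (auto simp: metric_open_def A_def)
  ultimately show ?thesis by (metis times_mem_tau_iff mem_tau_iff)
qed

lemma metrizable_in_N_A: "metrizable_in_N (A n) (tau n)"
  unfolding metrizable_in_N_def using metric_on_dn symm_act_graph_A metric_open_dn_iff by blast

lemma not_symm_act_graphs_dn: "\<not> symm act_graphs {graph (A n) (dn n) | n. True}"
proof
  assume "symm act_graphs {graph (A n) (dn n) | n. True}"
  then obtain S where "finite S" and S: "\<And>\<pi>. \<pi> \<in> Gperm \<Longrightarrow> fixes_blocks \<pi> S \<Longrightarrow>
      act_graphs \<pi> {graph (A n) (dn n) | n. True} = {graph (A n) (dn n) | n. True}"
    by (rule symmE) blast
  obtain m where m: "m \<notin> S" using ex_new_if_finite[OF infinite_UNIV_nat \<open>finite S\<close>] by blast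
  let ?\<pi> = "block_affine m 0 2"
  have "?\<pi> \<in> Gperm" by (rule block_affine_in_Gperm) simp
  have "graph (A m) (dn m) \<in> {graph (A n) (dn n) | n. True}" by blast
  then have "act_graph ?\<pi> (graph (A m) (dn m)) \<in> act_graphs ?\<pi> {graph (A n) (dn n) | n. True}"
    unfolding act_graphs_def by (rule imageI)
  then have "act_graph ?\<pi> (graph (A m) (dn m)) \<in> {graph (A n) (dn n) | n. True}"
    using S[OF \<open>?\<pi> \<in> Gperm\<close> fixes_blocks_block_affine[OF m]] by simp
  then obtain k where k: "act_graph ?\<pi> (graph (A m) (dn m)) = graph (A k) (dn k)" by blast
  have "(((m, 0), (m, 1)), dn m (m, 0) (m, 1)) \<in> graph (A m) (dn m)"
    unfolding graph_def A_def by blast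
  then have "((?\<pi> (m, 0), ?\<pi> (m, 1)), 1) \<in> act_graph ?\<pi> (graph (A m) (dn m))"
    unfolding act_graph_def by (rule image_eqI[rotated]) (simp add: dn_def)
  then have "(((m, 0), (m, 2)), 1) \<in> graph (A k) (dn k)" using k by simp
  then show False unfolding graph_def dn_def by auto
qed

lemma metric_on_pos:
  assumes "metric_on X d" "a \<in> X" "b \<in> X" "a \<noteq> b"
  shows "0 < d a b"
proof -
  have "\<forall>a\<in>X. \<forall>b\<in>X. 0 \<le> d a b \<and> (d a b = 0 \<longleftrightarrow> a = b) \<and> d a b = d b a"
    using assms(1) unfolding metric_on_def by (rule conjunct1)
  from bspec[OF bspec[OF this assms(2)] assms(3)] show ?thesis
    using assms(4) by simp
qed

lemma metric_open_singleton_isolated: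
  assumes "metric_open X d U" "a \<in> U" "U \<subseteq> Y" "c > 0" "\<And>b. b \<in> Y \<Longrightarrow> b \<noteq> a \<Longrightarrow> c \<le> d a b"
  shows "metric_open X d {a}"
proof -
  obtain e where "e > 0" and e: "\<And>b. b \<in> X \<Longrightarrow> d a b < e \<Longrightarrow> b \<in> U"
    using assms(1,2) unfolding metric_open_def by blast
  have "b = a" if "b \<in> X" "d a b < min e c" for b
  proof (rule ccontr)
    assume "b \<noteq> a"
    moreover have "b \<in> Y" using e[OF that(1)] that(2) assms(3) by auto
    ultimately show False using assms(5) that(2) by fastforce
  qed
  moreover have "{a} \<subseteq> X" using assms(1,2) unfolding metric_open_def by blast
  moreover have "min e c > 0" using \<open>e > 0\<close> \<open>c > 0\<close> by simp
  ultimately show ?thesis unfolding metric_open_def by blast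
qed

lemma not_metrizable_in_N_sum_top: "\<not> metrizable_in_N UNIV sum_top"
proof
  assume "metrizable_in_N UNIV sum_top"
  then obtain d where met: "metric_on UNIV d" and graph: "symm act_graph (graph UNIV d)"
    and opens: "\<And>U. symm act_set U \<Longrightarrow> U \<in> sum_top \<longleftrightarrow> metric_open UNIV d U"
    unfolding metrizable_in_N_def by blast
  obtain S where "finite S"
    and iso: "\<And>\<pi> a b. \<pi> \<in> Gperm \<Longrightarrow> fixes_blocks \<pi> S \<Longrightarrow> d (\<pi> a) (\<pi> b) = d a b"
    using symm_act_graph_isometries[OF graph] by blast
  obtain m where m: "m \<notin> S" using ex_new_if_finite[OF infinite_UNIV_nat \<open>finite S\<close>] by blast
  define c where "c = d (m, 0) (m, 1)"
  have "c > 0"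
    unfolding c_def using metric_on_pos[OF met] by simp
  have inv: "d (block_affine m u r a) (block_affine m u r b) = d a b" if "r > 0" for u r a b
    using iso[OF block_affine_in_Gperm[OF that] fixes_blocks_block_affine[OF m]] .
  have dist_c: "d (m, 0) b = c" if b: "b \<in> A m" "b \<noteq> (m, 0)" for b
  proof -
    obtain t where "b = (m, t)" "t \<noteq> 0" using b by (cases b) (auto simp: A_def)
    with metric_const_on_block[OF met inv, of 0 t] show ?thesis
      unfolding c_def by simp
  qed
  have "metric_open UNIV d (A m)"
    using opens[OF symm_act_set_subset_A[OF order_refl]] tau_subset_sum_top[OF A_mem_tau] by simp
  then have "metric_open UNIV d {(m, 0)}"
    by (rule metric_open_singleton_isolated[of _ _ _ _ "A m"]) (use \<open>c > 0\<close> dist_c A_def in auto)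
  then have "{(m, 0)} \<in> sum_top"
    using opens symm_act_set_subset_A[of "{(m, 0)}" m] by (simp add: A_def)
  then have "{(m, 0)} \<inter> A m \<in> tau m" unfolding sum_top_def by blast
  moreover have "{(m, 0)} \<inter> A m = {m} \<times> {0::real}" by (auto simp: A_def)
  ultimately show False using times_mem_tau_iff[of m "{0::real}"] not_open_singleton[of "0::real"] by simp
qed

theorem proposition3p10:
  shows "(\<forall>n. metrizable_in_N (A n) (tau n))
    \<and> (\<forall>n. metric_on (A n) (dn n) \<and> symm act_graph (graph (A n) (dn n)))
    \<and> inj (\<lambda>n. (A n, tauN n)) \<and> symm act_spacefam (\<lambda>n. (A n, tauN n))
    \<and> \<not> metrizable_in_N UNIV sum_top
    \<and> \<not> symm act_graphs {graph (A n) (dn n) | n. True}"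
proof -
  have "inj (\<lambda>n. (A n, tauN n))"
    by (auto simp: inj_def A_def)
  then show ?thesis
    using metrizable_in_N_A metric_on_dn symm_act_graph_A symm_act_spacefam_blocks
      not_metrizable_in_N_sum_top not_symm_act_graphs_dn by blast
qed

end
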